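(* Let $1\le W<d<\infty$ be integers and let $\Phi:\mathbb R^W\to\mathbb R^d$ be a $C^2$ map. Suppose that for some open set $U\subset\mathbb R^d$ the first and second derivatives of $\Phi$ are uniformly bounded on $\Phi^{-1}(U)$, and that the Jacobian $J(\mathbf w)=\frac{\partial\Phi}{\partial\mathbf w}(\mathbf w)$ is uniformly non-degenerate on $\Phi^{-1}(U)$ in the sense that the smallest eigenvalue of $J^*(\mathbf w)J(\mathbf w)$ is bounded below by a positive constant for all $\mathbf w\in\Phi^{-1}(U)$. Then $F_\Phi\cap U\subset\Phi(\mathbb R^W)$.
   Context: For a target $\mathbf f\in\mathbb R^d$, let $L_{\mathbf f}(\mathbf w)=\frac12\|\mathbf f-\Phi(\mathbf w)\|^2$ and let $\mathbf w(t)$, $t\ge0$, be the solution of the gradient flow $\frac{d\mathbf w}{dt}=-\nabla_{\mathbf w}L_{\mathbf f}(\mathbf w(t))$ with $\mathbf w(0)=\mathbf 0$. The set of GF-learnable targets is $F_\Phi=\{\mathbf f\in\mathbb R^d:\inf_{t\ge0}L_{\mathbf f}(\mathbf w(t))=0\}$. *)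

theory Defs
  imports "HOL-Analysis.Analysis"
begin

definition loss :: "('w::real_normed_vector \<Rightarrow> 'd::real_normed_vector) \<Rightarrow> 'd \<Rightarrow> 'w \<Rightarrow> real" where
  "loss \<Phi> f w = (1/2) * (norm (f - \<Phi> w))^2"

definition gradient :: "('a::real_inner \<Rightarrow> real) \<Rightarrow> 'a \<Rightarrow> 'a" where
  "gradient g x = (THE v. (g has_derivative (\<lambda>h. v \<bullet> h)) (at x))"

definition GF_learnable :: "(real^'w \<Rightarrow> real^'d) \<Rightarrow> (real^'d) set" where
  "GF_learnable \<Phi> = {f. \<exists>w :: real \<Rightarrow> real^'w.
      w 0 = 0 \<and>
      (\<forall>t\<ge>0. (w has_vector_derivative (- gradient (loss \<Phi> f) (w t))) (at t within {0..})) \<and>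
      (INF t\<in>{0..}. loss \<Phi> f (w t)) = 0}"

text \<open>All eigenvalues of a square matrix are at least c (for the symmetric matrix J^T J this
  says its smallest eigenvalue is at least c).\<close>
definition eigenvalues_ge :: "real^'n^'n \<Rightarrow> real \<Rightarrow> bool" where
  "eigenvalues_ge A c \<longleftrightarrow> (\<forall>e. (\<exists>v. v \<noteq> 0 \<and> A *v v = e *\<^sub>R v) \<longrightarrow> c \<le> e)"

end

theory Submission
  imports Defs
begin

text \<open>
  Let \<open>f \<in> U\<close> be learnable and \<open>L w = |f - \<Phi> w|\<^sup>2 / 2\<close>. Near any \<open>a\<close> whose residual
  \<open>|f - \<Phi> a|\<close> is small enough, the bounds on \<open>\<Phi>'\<close>, \<open>\<Phi>''\<close> and the lower bound
  \<open>c\<close> on \<open>J\<^sup>* J\<close> make \<open>\<nabla>L\<close> monotone on a ball \<open>K\<close> around \<open>a\<close>, and a Taylor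
  estimate puts the minimiser \<open>z\<close> of \<open>L\<close> on \<open>K\<close> close to \<open>a\<close>, hence in the interior: \<open>z\<close>
  is a critical point, and \<open>\<nabla>L x \<bullet> (x - z) \<ge> 0\<close> on a ball around \<open>z\<close> containing \<open>a\<close>.
  Along the gradient flow \<open>|w t - z|\<close> therefore cannot grow once \<open>w\<close> has reached \<open>a\<close>, so
  \<open>L (w t) \<ge> L z\<close> for all \<open>t\<close>. The flow does reach such an \<open>a\<close> because \<open>inf L (w t) = 0\<close>,
  and then \<open>L z = 0\<close>, i.e. \<open>f = \<Phi> z\<close>.
\<close>

lemma linear_coeff_eq_0_if_quadratic_nonneg:
  fixes a b :: real
  assumes nonneg: "\<And>s. 0 \<le> b * s + a * s^2"
  shows "b = 0"
proof (rule ccontr)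
  assume "b \<noteq> 0"
  define s where "s = \<bar>b\<bar> / (2 * (\<bar>a\<bar> + 1))"
  have s: "0 < s" "2 * \<bar>a\<bar> * s < \<bar>b\<bar>"
    using \<open>b \<noteq> 0\<close> by (auto simp: s_def field_simps)
  have "\<bar>b\<bar> * s \<le> a * s^2"
    using nonneg[of s] nonneg[of "- s"] by (cases "b \<ge> 0") auto
  also have "\<dots> \<le> \<bar>a\<bar> * s^2"
    by (rule mult_right_mono) auto
  finally have "\<bar>b\<bar> \<le> \<bar>a\<bar> * s"
    using s(1) by (simp add: power2_eq_square)
  then show False
    using s by linarith
qed

lemma inner_image_eq_if_rayleigh_min:
  fixes J :: "'a::real_inner \<Rightarrow> 'b::real_inner"
  assumes J: "linear J"
    and min: "\<And>x. l * (norm x)^2 \<le> (norm (J x))^2"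
    and attained: "(norm (J u))^2 = l * (norm u)^2"
  shows "J u \<bullet> J h = l * (u \<bullet> h)"
proof -
  have expand: "(norm (p + s *\<^sub>R q))^2 = (norm p)^2 + 2 * s * (p \<bullet> q) + s^2 * (norm q)^2"
    for p q :: "'c::real_inner" and s
    unfolding power2_norm_eq_inner
    by (simp add: inner_add_left inner_add_right inner_commute algebra_simps power2_eq_square)
  have "0 \<le> (2 * (J u \<bullet> J h - l * (u \<bullet> h))) * s + ((norm (J h))^2 - l * (norm h)^2) * s^2" for s
    using min[of "u + s *\<^sub>R h"] attained
    by (simp add: linear_add[OF J] linear_scale[OF J] expand algebra_simps)
  from linear_coeff_eq_0_if_quadratic_nonneg[OF this] show ?thesis
    by simp
qed

lemma exists_rayleigh_min:
  fixes J :: "'a::euclidean_space \<Rightarrow> 'b::real_normed_vector"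
  assumes J: "linear J"
  shows "\<exists>u. norm u = 1 \<and> (\<forall>x. (norm (J u))^2 * (norm x)^2 \<le> (norm (J x))^2)"
proof -
  have "continuous_on (sphere 0 1) (\<lambda>u. (norm (J u))^2)"
    using J by (intro continuous_intros linear_continuous_on) (simp add: linear_conv_bounded_linear)
  moreover have "sphere (0::'a) 1 \<noteq> {}"
    by simp
  ultimately obtain u where u: "u \<in> sphere 0 1"
    and u_min: "\<forall>v\<in>sphere 0 1. (norm (J u))^2 \<le> (norm (J v))^2"
    using continuous_attains_inf[OF compact_sphere] by blast
  have "(norm (J u))^2 * (norm x)^2 \<le> (norm (J x))^2" for x
  proof (cases "x = 0")
    case False
    have "(norm (J u))^2 \<le> (norm (J (x /\<^sub>R norm x)))^2"
      using u_min False by simp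
    also have "\<dots> = (norm (J x))^2 / (norm x)^2"
      by (simp add: linear_scale[OF J] power_mult_distrib power_inverse divide_inverse mult.commute)
    finally show ?thesis
      using False by (simp add: field_simps)
  qed (simp add: linear_0[OF J])
  with u show ?thesis
    by auto
qed

text \<open>A minimiser \<open>u\<close> of \<open>|J u|\<close> on the unit sphere is an eigenvector of \<open>J\<^sup>T J\<close>
  for the eigenvalue \<open>|J u|\<^sup>2\<close>.\<close>

lemma norm_ge_if_eigenvalues_ge:
  fixes J :: "real^'m \<Rightarrow> real^'n"
  assumes J: "linear J"
    and ev: "eigenvalues_ge (transpose (matrix J) ** matrix J) c"
  shows "c * (norm x)^2 \<le> (norm (J x))^2"
proof -
  obtain u where u: "norm u = 1" and min: "\<forall>x. (norm (J u))^2 * (norm x)^2 \<le> (norm (J x))^2"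
    using exists_rayleigh_min[OF J] by blast
  define l where "l = (norm (J u))^2"
  have matrix_J: "matrix J *v y = J y" for y
    using J by (metis matrix_vector_mul(2))
  have "(transpose (matrix J) ** matrix J) *v u = l *\<^sub>R u"
  proof (rule vector_eq_rdot[THEN iffD1], rule allI)
    fix h
    have "((transpose (matrix J) ** matrix J) *v u) \<bullet> h = J u \<bullet> J h"
      by (simp add: matrix_vector_mul_assoc[symmetric] transpose_matrix_vector dot_lmul_matrix
          matrix_J)
    also have "\<dots> = l * (u \<bullet> h)"
      using u min by (intro inner_image_eq_if_rayleigh_min[OF J]) (simp_all add: l_def)
    finally show "((transpose (matrix J) ** matrix J) *v u) \<bullet> h = (l *\<^sub>R u) \<bullet> h"
      by simp
  qed
  moreover have "u \<noteq> 0"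
    using u by auto
  ultimately have "c \<le> l"
    using ev unfolding eigenvalues_ge_def by blast
  then have "c * (norm x)^2 \<le> l * (norm x)^2"
    by (simp add: mult_right_mono)
  also have "\<dots> \<le> (norm (J x))^2"
    using min by (simp add: l_def)
  finally show ?thesis .
qed

lemma differentiable_bound_blinfun:
  fixes F :: "'a::real_normed_vector \<Rightarrow> 'b::real_normed_vector"
  assumes "convex K"
    and "\<And>z. z \<in> K \<Longrightarrow> (F has_derivative blinfun_apply (F' z)) (at z)"
    and "\<And>z. z \<in> K \<Longrightarrow> norm (F' z) \<le> B"
    and "x \<in> K" "y \<in> K"
  shows "norm (F x - F y) \<le> B * norm (x - y)"
proof (rule differentiable_bound[OF assms(1) _ _ assms(4,5)])
  show "\<And>z. z \<in> K \<Longrightarrow> (F has_derivative blinfun_apply (F' z)) (at z within K)"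
    using assms(2) has_derivative_at_withinI by blast
  show "\<And>z. z \<in> K \<Longrightarrow> onorm (blinfun_apply (F' z)) \<le> B"
    using assms(3) by (simp add: norm_blinfun.rep_eq[symmetric])
qed

lemma norm_linearization_error_le:
  fixes \<Phi> :: "'a::real_normed_vector \<Rightarrow> 'b::real_normed_vector"
  assumes D1: "\<And>z. z \<in> closed_segment y x \<Longrightarrow> (\<Phi> has_derivative blinfun_apply (\<Phi>' z)) (at z)"
    and D2: "\<And>z. z \<in> closed_segment y x \<Longrightarrow> (\<Phi>' has_derivative blinfun_apply (\<Phi>'' z)) (at z)"
    and bound: "\<And>z. z \<in> closed_segment y x \<Longrightarrow> norm (\<Phi>'' z) \<le> B"
  shows "norm (\<Phi> x - \<Phi> y - \<Phi>' y (x - y)) \<le> B * (norm (x - y))^2"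
proof -
  have "0 \<le> B"
    using bound[of y] by (meson ends_in_segment(1) norm_ge_zero order_trans)
  have "norm (\<Phi> x - \<Phi> y - \<Phi>' y (x - y)) \<le> norm (x - y) * (B * norm (x - y))"
  proof (rule differentiable_bound_linearization[where S = "closed_segment y x"
        and f' = "\<lambda>z. blinfun_apply (\<Phi>' z)"])
    show "y + t *\<^sub>R (x - y) \<in> closed_segment y x" if "t \<in> {0..1}" for t
      using that by (auto simp: closed_segment_def algebra_simps intro!: exI[of _ t])
    show "(\<Phi> has_derivative blinfun_apply (\<Phi>' z)) (at z within closed_segment y x)"
      if "z \<in> closed_segment y x" for z
      using D1[OF that] by (rule has_derivative_at_withinI)
    show "onorm (blinfun_apply (\<Phi>' z) - blinfun_apply (\<Phi>' y)) \<le> B * norm (x - y)"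
      if "z \<in> closed_segment y x" for z
    proof -
      have "norm (\<Phi>' z - \<Phi>' y) \<le> B * norm (z - y)"
        using convex_closed_segment D2 bound that by (rule differentiable_bound_blinfun) auto
      also have "\<dots> \<le> B * norm (x - y)"
        using segment_bound(1)[OF that] \<open>0 \<le> B\<close> by (rule mult_left_mono)
      finally show ?thesis
        by (simp add: norm_blinfun.rep_eq minus_blinfun.rep_eq fun_diff_def)
    qed
  qed simp
  then show ?thesis
    by (simp add: power2_eq_square algebra_simps)
qed

lemma le_at_right_end_if_le_before:
  fixes D :: "real \<Rightarrow> real"
  assumes cont: "continuous_on {t0..t1} D"
    and "t0 \<le> t1" "D t0 \<le> R"
    and before: "\<And>s. t0 \<le> s \<Longrightarrow> s < t1 \<Longrightarrow> D s \<le> R"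
  shows "D t1 \<le> R"
proof (cases "t0 = t1")
  case False
  with \<open>t0 \<le> t1\<close> have "continuous_on (closure {t0..<t1}) D" "t1 \<in> closure {t0..<t1}"
    using cont by simp_all
  then show ?thesis
    by (rule continuous_le_on_closure) (use before in auto)
qed (use \<open>D t0 \<le> R\<close> in simp)

text \<open>Continuous induction: consider the first time at which \<open>D\<close> exceeds \<open>R\<close>.\<close>

lemma le_at_end_if_locally_nonincreasing:
  fixes D :: "real \<Rightarrow> real"
  assumes cont: "continuous_on {t0..T} D"
    and start: "D t0 \<le> R"
    and step: "\<And>t. t0 \<le> t \<Longrightarrow> t < T \<Longrightarrow> D t \<le> R \<Longrightarrow>
      \<exists>\<delta>>0. t + \<delta> \<le> T \<and> (\<forall>s\<in>{t..t+\<delta>}. D s \<le> D t)"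
    and "t0 \<le> T"
  shows "D T \<le> R"
proof (rule ccontr)
  assume "\<not> D T \<le> R"
  define E where "E = {s. t0 \<le> s \<and> s \<le> T \<and> R < D s}"
  define t1 where "t1 = Inf E"
  have "T \<in> E"
    using \<open>t0 \<le> T\<close> \<open>\<not> D T \<le> R\<close> by (simp add: E_def)
  have E: "E \<noteq> {}" "bdd_below E"
    using \<open>T \<in> E\<close> by (auto simp: E_def bdd_below_def)
  have "t0 \<le> t1"
    unfolding t1_def using E(1) by (rule cInf_greatest) (simp add: E_def)
  have "t1 \<le> T"
    unfolding t1_def using \<open>T \<in> E\<close> E(2) by (rule cInf_lower)
  have before: "D s \<le> R" if "t0 \<le> s" "s < t1" for s
  proof (rule ccontr)
    assume "\<not> D s \<le> R"
    with that \<open>t1 \<le> T\<close> have "s \<in> E"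
      by (simp add: E_def)
    then have "t1 \<le> s"
      unfolding t1_def using E(2) by (rule cInf_lower)
    with that show False
      by simp
  qed
  have "continuous_on {t0..t1} D"
    using \<open>t1 \<le> T\<close> by (intro continuous_on_subset[OF cont]) auto
  then have "D t1 \<le> R"
    using \<open>t0 \<le> t1\<close> start before by (rule le_at_right_end_if_le_before)
  with \<open>t1 \<le> T\<close> \<open>\<not> D T \<le> R\<close> have "t1 < T"
    by (cases "t1 = T") auto
  with step \<open>t0 \<le> t1\<close> \<open>D t1 \<le> R\<close> obtain \<delta> where "\<delta> > 0"
    and \<delta>: "\<forall>s\<in>{t1..t1+\<delta>}. D s \<le> D t1"
    by blast
  have "t1 + \<delta> \<le> Inf E"
  proof (rule cInf_greatest[OF E(1)])
    fix s
    assume "s \<in> E"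
    then have s: "t0 \<le> s" "R < D s"
      by (auto simp: E_def)
    show "t1 + \<delta> \<le> s"
    proof (rule ccontr)
      assume "\<not> t1 + \<delta> \<le> s"
      then have "D s \<le> R"
        using before[OF s(1)] \<delta>[rule_format, of s] \<open>D t1 \<le> R\<close> by (cases "s < t1") auto
      with s(2) show False
        by simp
    qed
  qed
  then show False
    using \<open>\<delta> > 0\<close> by (simp add: t1_def)
qed

lemma exists_ball_norm_diff_le:
  fixes \<Phi> :: "'a::real_normed_vector \<Rightarrow> 'b::real_normed_vector"
  assumes D1: "\<And>x. (\<Phi> has_derivative blinfun_apply (\<Phi>' x)) (at x)"
    and bound: "\<And>x. \<Phi> x \<in> ball y \<epsilon> \<Longrightarrow> norm (\<Phi>' x) \<le> B"
    and "\<Phi> p \<in> ball y \<epsilon>"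
  shows "\<exists>r>0. \<forall>q\<in>ball p r. norm (\<Phi> q - \<Phi> p) \<le> B * norm (q - p)"
proof -
  have "continuous_on UNIV \<Phi>"
    using D1 by (meson continuous_at_imp_continuous_on has_derivative_continuous)
  then have "open (\<Phi> -` ball y \<epsilon>)"
    by (simp add: open_vimage)
  then obtain r where "r > 0" and r: "ball p r \<subseteq> \<Phi> -` ball y \<epsilon>"
    using \<open>\<Phi> p \<in> ball y \<epsilon>\<close> open_contains_ball by blast
  then have bound_r: "norm (\<Phi>' z) \<le> B" if "z \<in> ball p r" for z
    using that bound by blast
  have "norm (\<Phi> q - \<Phi> p) \<le> B * norm (q - p)" if "q \<in> ball p r" for q
    using \<open>r > 0\<close> that by (intro differentiable_bound_blinfun[of "ball p r" \<Phi> \<Phi>'] D1 bound_r) auto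
  with \<open>r > 0\<close> show ?thesis
    by blast
qed

lemma exists_segment_step_norm_diff_le:
  fixes \<Phi> :: "'a::real_normed_vector \<Rightarrow> 'b::real_normed_vector"
  assumes D1: "\<And>x. (\<Phi> has_derivative blinfun_apply (\<Phi>' x)) (at x)"
    and bound: "\<And>x. \<Phi> x \<in> ball y \<epsilon> \<Longrightarrow> norm (\<Phi>' x) \<le> B"
    and "\<Phi> (a + t *\<^sub>R v) \<in> ball y \<epsilon>"
  shows "\<exists>d>0. \<forall>s\<in>{t..t+d}. norm (\<Phi> (a + s *\<^sub>R v) - \<Phi> (a + t *\<^sub>R v)) \<le> B * norm v * (s - t)"
proof -
  obtain r where "r > 0" and lipschitz:
      "\<forall>q\<in>ball (a + t *\<^sub>R v) r. norm (\<Phi> q - \<Phi> (a + t *\<^sub>R v)) \<le> B * norm (q - (a + t *\<^sub>R v))"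
    using exists_ball_norm_diff_le[OF D1 bound assms(3)] by blast
  define d where "d = r / (2 * (norm v + 1))"
  have pos: "0 < 2 * (norm v + 1)"
    by (smt (verit) norm_ge_zero)
  with \<open>r > 0\<close> have "d > 0"
    by (simp add: d_def)
  have "norm (\<Phi> (a + s *\<^sub>R v) - \<Phi> (a + t *\<^sub>R v)) \<le> B * norm v * (s - t)" if "s \<in> {t..t+d}" for s
  proof -
    have step: "(a + s *\<^sub>R v) - (a + t *\<^sub>R v) = (s - t) *\<^sub>R v"
      by (simp add: scaleR_diff_left)
    have "dist (a + t *\<^sub>R v) (a + s *\<^sub>R v) = norm ((s - t) *\<^sub>R v)"
      by (metis dist_norm norm_minus_commute step)
    also have "\<dots> \<le> d * (norm v + 1)"
      using that \<open>d > 0\<close> by simp (intro mult_mono; simp)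
    also have "\<dots> = r / 2"
      using pos by (simp add: d_def field_simps)
    also have "\<dots> < r"
      using \<open>r > 0\<close> by simp
    finally have "a + s *\<^sub>R v \<in> ball (a + t *\<^sub>R v) r"
      by simp
    with lipschitz have "norm (\<Phi> (a + s *\<^sub>R v) - \<Phi> (a + t *\<^sub>R v))
        \<le> B * norm ((a + s *\<^sub>R v) - (a + t *\<^sub>R v))"
      by blast
    also have "\<dots> = B * norm v * (s - t)"
      unfolding step using that by simp
    finally show ?thesis .
  qed
  with \<open>d > 0\<close> show ?thesis
    by blast
qed

text \<open>The derivative bound is only available while \<open>\<Phi>\<close> stays in the ball, and the estimate
  being proved is what keeps it there; hence continuous induction along the segment.\<close>

lemma norm_diff_le_if_derivative_bounded_near_image:
  fixes \<Phi> :: "'a::real_normed_vector \<Rightarrow> 'b::real_normed_vector"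
  assumes D1: "\<And>x. (\<Phi> has_derivative blinfun_apply (\<Phi>' x)) (at x)"
    and bound: "\<And>x. \<Phi> x \<in> ball y \<epsilon> \<Longrightarrow> norm (\<Phi>' x) \<le> B"
    and "0 \<le> B"
    and room: "dist y (\<Phi> a) + B * norm (b - a) < \<epsilon>"
  shows "norm (\<Phi> b - \<Phi> a) \<le> B * norm (b - a)"
proof -
  define D where "D s = norm (\<Phi> (a + s *\<^sub>R (b - a)) - \<Phi> a) - B * norm (b - a) * s" for s
  have "continuous_on UNIV \<Phi>"
    using D1 by (meson continuous_at_imp_continuous_on has_derivative_continuous)
  then have "continuous_on {0..1} (\<lambda>s. \<Phi> (a + s *\<^sub>R (b - a)))"
    by (rule continuous_on_compose2) (auto intro!: continuous_intros)
  then have "continuous_on {0..1} D"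
    unfolding D_def by (intro continuous_intros)
  then have "D 1 \<le> 0"
  proof (rule le_at_end_if_locally_nonincreasing)
    fix t :: real
    assume "0 \<le> t" "t < 1" "D t \<le> 0"
    then have "norm (\<Phi> (a + t *\<^sub>R (b - a)) - \<Phi> a) \<le> B * norm (b - a)"
      using \<open>0 \<le> B\<close> mult_left_le[of t "B * norm (b - a)"] by (simp add: D_def)
    then have "\<Phi> (a + t *\<^sub>R (b - a)) \<in> ball y \<epsilon>"
      using room dist_triangle[of y "\<Phi> (a + t *\<^sub>R (b - a))" "\<Phi> a"]
      by (simp add: dist_norm norm_minus_commute)
    then obtain d where "d > 0" and d: "\<forall>s\<in>{t..t+d}.
        norm (\<Phi> (a + s *\<^sub>R (b - a)) - \<Phi> (a + t *\<^sub>R (b - a))) \<le> B * norm (b - a) * (s - t)"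
      using exists_segment_step_norm_diff_le[OF D1 bound] by blast
    show "\<exists>\<delta>>0. t + \<delta> \<le> 1 \<and> (\<forall>s\<in>{t..t+\<delta>}. D s \<le> D t)"
    proof (intro exI[of _ "min d (1 - t)"] conjI ballI)
      fix s
      assume "s \<in> {t..t + min d (1 - t)}"
      with d have "norm (\<Phi> (a + s *\<^sub>R (b - a)) - \<Phi> (a + t *\<^sub>R (b - a))) \<le> B * norm (b - a) * (s - t)"
        by auto
      then show "D s \<le> D t"
        using norm_triangle_ineq[of "\<Phi> (a + s *\<^sub>R (b - a)) - \<Phi> (a + t *\<^sub>R (b - a))"
            "\<Phi> (a + t *\<^sub>R (b - a)) - \<Phi> a"]
        by (simp add: D_def right_diff_distrib)
    qed (use \<open>d > 0\<close> \<open>t < 1\<close> in auto)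
  qed (simp_all add: D_def)
  then show ?thesis
    by (simp add: D_def)
qed

lemma has_derivative_loss:
  fixes \<Phi> :: "'a::real_normed_vector \<Rightarrow> 'b::real_inner"
  assumes "(\<Phi> has_derivative J) (at x)"
  shows "(loss \<Phi> f has_derivative (\<lambda>h. - ((f - \<Phi> x) \<bullet> J h))) (at x)"
proof -
  have "loss \<Phi> f = (\<lambda>w. (1/2) * ((f - \<Phi> w) \<bullet> (f - \<Phi> w)))"
    by (auto simp: loss_def power2_norm_eq_inner)
  moreover have "((\<lambda>w. (1/2) * ((f - \<Phi> w) \<bullet> (f - \<Phi> w))) has_derivative
      (\<lambda>h. (1/2) * ((f - \<Phi> x) \<bullet> (0 - J h) + (0 - J h) \<bullet> (f - \<Phi> x)))) (at x)"
    by (rule derivative_eq_intros assms refl)+ simp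
  moreover have "(\<lambda>h. (1/2) * ((f - \<Phi> x) \<bullet> (0 - J h) + (0 - J h) \<bullet> (f - \<Phi> x)))
      = (\<lambda>h. - ((f - \<Phi> x) \<bullet> J h))"
    by (auto simp: inner_commute)
  ultimately show ?thesis
    by simp
qed

lemma gradient_eqI:
  fixes g :: "'a::real_inner \<Rightarrow> real"
  assumes "(g has_derivative (\<lambda>h. G \<bullet> h)) (at x)"
  shows "gradient g x = G"
  unfolding gradient_def
proof (rule the_equality)
  fix v
  assume "(g has_derivative (\<lambda>h. v \<bullet> h)) (at x)"
  from has_derivative_unique[OF this assms] have "\<And>h. v \<bullet> h = G \<bullet> h"
    by metis
  then show "v = G"
    by (metis vector_eq_rdot)
qed (rule assms)

lemma inner_gradient_loss:
  fixes \<Phi> :: "'a::euclidean_space \<Rightarrow> 'b::euclidean_space"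
  assumes "(\<Phi> has_derivative J) (at x)"
  shows "gradient (loss \<Phi> f) x \<bullet> h = - ((f - \<Phi> x) \<bullet> J h)"
proof -
  have J: "linear J"
    using assms by (rule has_derivative_linear)
  have "(\<lambda>h. - ((f - \<Phi> x) \<bullet> J h)) = (\<lambda>h. (- adjoint J (f - \<Phi> x)) \<bullet> h)"
    by (simp add: adjoint_clauses[OF J])
  then have "gradient (loss \<Phi> f) x = - adjoint J (f - \<Phi> x)"
    using has_derivative_loss[OF assms] by (metis gradient_eqI)
  then show ?thesis
    by (simp add: adjoint_clauses[OF J])
qed

lemma has_derivative_loss_gradient:
  fixes \<Phi> :: "'a::euclidean_space \<Rightarrow> 'b::euclidean_space"
  assumes "(\<Phi> has_derivative J) (at x)"
  shows "(loss \<Phi> f has_derivative (\<lambda>h. gradient (loss \<Phi> f) x \<bullet> h)) (at x)"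
  using has_derivative_loss[OF assms] by (simp add: inner_gradient_loss[OF assms])

lemma inner_gradient_loss_diff_eq:
  fixes \<Phi> :: "'a::euclidean_space \<Rightarrow> 'b::euclidean_space"
  assumes "(\<Phi> has_derivative blinfun_apply (\<Phi>' x)) (at x)"
    and "(\<Phi> has_derivative blinfun_apply (\<Phi>' y)) (at y)"
  shows "(gradient (loss \<Phi> f) x - gradient (loss \<Phi> f) y) \<bullet> (x - y)
    = (norm (\<Phi>' y (x - y)))^2 + (\<Phi> x - \<Phi> y - \<Phi>' y (x - y)) \<bullet> \<Phi>' y (x - y)
      + (f - \<Phi> x) \<bullet> (\<Phi>' y (x - y) - \<Phi>' x (x - y))"
proof -
  define J where "J = \<Phi>' y (x - y)"
  define E where "E = \<Phi> x - \<Phi> y - J"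
  have residual: "f - \<Phi> y = (f - \<Phi> x) + J + E"
    by (simp add: E_def)
  have "(gradient (loss \<Phi> f) x - gradient (loss \<Phi> f) y) \<bullet> (x - y)
      = (f - \<Phi> y) \<bullet> J - (f - \<Phi> x) \<bullet> \<Phi>' x (x - y)"
    using assms by (simp add: inner_diff_left inner_gradient_loss J_def)
  also have "\<dots> = (norm J)^2 + E \<bullet> J + (f - \<Phi> x) \<bullet> (J - \<Phi>' x (x - y))"
    unfolding residual by (simp add: inner_add_left inner_diff_right power2_norm_eq_inner)
  finally show ?thesis
    by (simp only: J_def E_def)
qed

lemma inner_gradient_loss_diff_ge:
  fixes \<Phi> :: "'a::euclidean_space \<Rightarrow> 'b::euclidean_space"
  assumes D1: "\<And>z. z \<in> closed_segment y x \<Longrightarrow> (\<Phi> has_derivative blinfun_apply (\<Phi>' z)) (at z)"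
    and D2: "\<And>z. z \<in> closed_segment y x \<Longrightarrow> (\<Phi>' has_derivative blinfun_apply (\<Phi>'' z)) (at z)"
    and bound1: "\<And>z. z \<in> closed_segment y x \<Longrightarrow> norm (\<Phi>' z) \<le> B"
    and bound2: "\<And>z. z \<in> closed_segment y x \<Longrightarrow> norm (\<Phi>'' z) \<le> B"
    and coercive: "\<And>v. c * (norm v)^2 \<le> (norm (\<Phi>' y v))^2"
  shows "(c - B^2 * norm (x - y) - B * norm (f - \<Phi> x)) * (norm (x - y))^2
    \<le> (gradient (loss \<Phi> f) x - gradient (loss \<Phi> f) y) \<bullet> (x - y)"
proof -
  define v where "v = x - y"
  define E where "E = \<Phi> x - \<Phi> y - \<Phi>' y v"
  have "0 \<le> B"
    using bound1[of y] by (meson ends_in_segment(1) norm_ge_zero order_trans)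
  have "\<bar>E \<bullet> \<Phi>' y v\<bar> \<le> norm E * norm (\<Phi>' y v)"
    by (rule Cauchy_Schwarz_ineq2)
  also have "\<dots> \<le> (B * (norm v)^2) * (B * norm v)"
  proof (rule mult_mono)
    show "norm E \<le> B * (norm v)^2"
      unfolding E_def v_def using D1 D2 bound2 by (rule norm_linearization_error_le)
    show "norm (\<Phi>' y v) \<le> B * norm v"
      using norm_blinfun[of "\<Phi>' y" v] bound1[of y]
      by (meson ends_in_segment(1) mult_right_mono norm_ge_zero order_trans)
  qed (use \<open>0 \<le> B\<close> in auto)
  finally have error_term: "- (B^2 * norm v * (norm v)^2) \<le> E \<bullet> \<Phi>' y v"
    by (simp add: abs_le_iff power2_eq_square algebra_simps)
  have "\<bar>(f - \<Phi> x) \<bullet> (\<Phi>' y v - \<Phi>' x v)\<bar> \<le> norm (f - \<Phi> x) * norm (\<Phi>' y v - \<Phi>' x v)"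
    by (rule Cauchy_Schwarz_ineq2)
  also have "\<dots> = norm (f - \<Phi> x) * norm ((\<Phi>' x - \<Phi>' y) v)"
    by (metis minus_blinfun.rep_eq fun_diff_def norm_minus_commute)
  also have "\<dots> \<le> norm (f - \<Phi> x) * (norm (\<Phi>' x - \<Phi>' y) * norm v)"
    by (simp add: mult_left_mono norm_blinfun)
  also have "\<dots> \<le> norm (f - \<Phi> x) * (B * norm v * norm v)"
  proof -
    have "norm (\<Phi>' x - \<Phi>' y) \<le> B * norm v"
      unfolding v_def using convex_closed_segment D2 bound2
      by (rule differentiable_bound_blinfun) auto
    then show ?thesis
      by (simp add: mult_left_mono mult_right_mono)
  qed
  finally have curvature_term: "- (B * norm (f - \<Phi> x) * (norm v)^2) \<le> (f - \<Phi> x) \<bullet> (\<Phi>' y v - \<Phi>' x v)"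
    by (simp add: abs_le_iff power2_eq_square algebra_simps)
  have "(gradient (loss \<Phi> f) x - gradient (loss \<Phi> f) y) \<bullet> v
      = (norm (\<Phi>' y v))^2 + E \<bullet> \<Phi>' y v + (f - \<Phi> x) \<bullet> (\<Phi>' y v - \<Phi>' x v)"
    unfolding v_def E_def using D1 by (intro inner_gradient_loss_diff_eq) auto
  moreover have "(c - B^2 * norm v - B * norm (f - \<Phi> x)) * (norm v)^2
      = c * (norm v)^2 - B^2 * norm v * (norm v)^2 - B * norm (f - \<Phi> x) * (norm v)^2"
    by (simp add: algebra_simps)
  ultimately have "(c - B^2 * norm v - B * norm (f - \<Phi> x)) * (norm v)^2
      \<le> (gradient (loss \<Phi> f) x - gradient (loss \<Phi> f) y) \<bullet> v"
    using coercive[of v] error_term curvature_term by linarith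
  then show ?thesis
    by (simp add: v_def)
qed

lemma gradient_flow_value_nonincreasing:
  fixes g :: "'a::real_inner \<Rightarrow> real" and w :: "real \<Rightarrow> 'a"
  assumes grad: "\<And>x. (g has_derivative (\<lambda>h. gradient g x \<bullet> h)) (at x)"
    and flow: "\<And>t. 0 \<le> t \<Longrightarrow> (w has_vector_derivative - gradient g (w t)) (at t within {0..})"
    and "0 \<le> s" "s \<le> t"
  shows "g (w t) \<le> g (w s)"
proof -
  have "((g \<circ> w) has_derivative (\<lambda>h. h * - (gradient g (w r) \<bullet> gradient g (w r)))) (at r within {s..t})"
    if "s \<le> r" "r \<le> t" for r
  proof -
    have "(w has_derivative (\<lambda>h. h *\<^sub>R - gradient g (w r))) (at r within {s..t})"
      using has_vector_derivative_within_subset[OF flow[of r]] that \<open>0 \<le> s\<close>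
      unfolding has_vector_derivative_def by auto
    from diff_chain_within[OF this has_derivative_at_withinI[OF grad]]
    show ?thesis
      by (simp add: o_def)
  qed
  from mvt_very_simple[OF \<open>s \<le> t\<close> this] obtain r
    where "(g \<circ> w) t - (g \<circ> w) s = (t - s) * - (gradient g (w r) \<bullet> gradient g (w r))"
    by blast
  moreover have "0 \<le> (t - s) * (gradient g (w r) \<bullet> gradient g (w r))"
    using \<open>s \<le> t\<close> by simp
  ultimately show ?thesis
    by simp
qed

lemma flow_dist_le_while_in_ball:
  fixes V :: "'a::real_inner \<Rightarrow> 'a" and w :: "real \<Rightarrow> 'a"
  assumes flow: "\<And>t. 0 \<le> t \<Longrightarrow> (w has_vector_derivative - V (w t)) (at t within {0..})"
    and inward: "\<And>x. x \<in> ball z r \<Longrightarrow> 0 \<le> V x \<bullet> (x - z)"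
    and "0 \<le> s" "s \<le> s'"
    and inside: "\<And>q. q \<in> {s..s'} \<Longrightarrow> w q \<in> ball z r"
  shows "dist z (w s') \<le> dist z (w s)"
proof -
  define D where "D q = (w q - z) \<bullet> (w q - z)" for q
  define D' where "D' q h = h * (- 2 * (V (w q) \<bullet> (w q - z)))" for q h :: real
  have "(D has_derivative D' q) (at q within {s..s'})" if "s \<le> q" "q \<le> s'" for q
  proof -
    have "0 \<le> q" "{s..s'} \<subseteq> {0..}"
      using that \<open>0 \<le> s\<close> by auto
    from has_vector_derivative_within_subset[OF flow[OF this(1)] this(2)]
    have "((\<lambda>q. w q - z) has_derivative (\<lambda>h. h *\<^sub>R - V (w q))) (at q within {s..s'})"
      unfolding has_vector_derivative_def by (intro derivative_eq_intros) auto
    from has_derivative_inner[OF this this] show ?thesis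
      unfolding D_def D'_def by (simp add: inner_commute algebra_simps)
  qed
  from mvt_very_simple[OF \<open>s \<le> s'\<close> this] obtain q where q: "q \<in> {s..s'}"
    and "D s' - D s = D' q (s' - s)"
    by blast
  moreover have "0 \<le> (s' - s) * (2 * (V (w q) \<bullet> (w q - z)))"
    using \<open>s \<le> s'\<close> inward[OF inside[OF q]] by simp
  ultimately have "(norm (w s' - z))^2 \<le> (norm (w s - z))^2"
    by (simp add: D_def D'_def power2_norm_eq_inner)
  then have "norm (w s' - z) \<le> norm (w s - z)"
    by (rule power2_le_imp_le) simp
  then show ?thesis
    by (simp add: dist_norm norm_minus_commute)
qed

lemma exists_right_step_in_ball:
  fixes w :: "real \<Rightarrow> 'a::metric_space"
  assumes "continuous (at s within {s..}) w" "w s \<in> ball z r"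
  shows "\<exists>d>0. \<forall>q\<in>{s..s+d}. w q \<in> ball z r"
proof -
  have "0 < r - dist z (w s)"
    using assms(2) by simp
  with assms(1) obtain d where "d > 0"
    and d: "\<And>q. q \<in> {s..} \<Longrightarrow> dist q s < d \<Longrightarrow> dist (w q) (w s) < r - dist z (w s)"
    unfolding continuous_within_eps_delta by blast
  have "w q \<in> ball z r" if "q \<in> {s..s + d/2}" for q
    using d[of q] that \<open>d > 0\<close> dist_triangle[of z "w q" "w s"]
    by (auto simp: dist_real_def dist_commute)
  with \<open>d > 0\<close> show ?thesis
    by (intro exI[of _ "d/2"]) auto
qed

lemma flow_dist_nonincreasing:
  fixes V :: "'a::real_inner \<Rightarrow> 'a" and w :: "real \<Rightarrow> 'a"
  assumes flow: "\<And>t. 0 \<le> t \<Longrightarrow> (w has_vector_derivative - V (w t)) (at t within {0..})"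
    and inward: "\<And>x. x \<in> ball z r \<Longrightarrow> 0 \<le> V x \<bullet> (x - z)"
    and "0 \<le> t0" "w t0 \<in> ball z r" "t0 \<le> t"
  shows "dist z (w t) \<le> dist z (w t0)"
proof -
  have w_cont: "continuous (at s within {0..}) w" if "0 \<le> s" for s
    using flow[OF that] by (rule has_vector_derivative_continuous)
  then have "continuous_on {0..} w"
    by (simp add: continuous_on_eq_continuous_within)
  then have "continuous_on {t0..t} w"
    by (rule continuous_on_subset) (use \<open>0 \<le> t0\<close> in auto)
  then have "continuous_on {t0..t} (\<lambda>s. dist z (w s))"
    by (intro continuous_intros)
  then show ?thesis
  proof (rule le_at_end_if_locally_nonincreasing)
    fix s
    assume "t0 \<le> s" "s < t" "dist z (w s) \<le> dist z (w t0)"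
    then have "0 \<le> s" "w s \<in> ball z r"
      using \<open>0 \<le> t0\<close> \<open>w t0 \<in> ball z r\<close> by auto
    moreover have "continuous (at s within {s..}) w"
      using w_cont[OF \<open>0 \<le> s\<close>] by (rule continuous_within_subset) (use \<open>0 \<le> s\<close> in auto)
    ultimately obtain d where "d > 0" and in_ball: "\<forall>q\<in>{s..s+d}. w q \<in> ball z r"
      using exists_right_step_in_ball by blast
    show "\<exists>\<delta>>0. s + \<delta> \<le> t \<and> (\<forall>s'\<in>{s..s+\<delta>}. dist z (w s') \<le> dist z (w s))"
    proof (intro exI[of _ "min d (t - s)"] conjI ballI)
      fix s'
      assume s': "s' \<in> {s..s + min d (t - s)}"
      show "dist z (w s') \<le> dist z (w s)"
      proof (rule flow_dist_le_while_in_ball[OF flow inward \<open>0 \<le> s\<close>])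
        show "s \<le> s'"
          using s' by simp
        show "w q \<in> ball z r" if "q \<in> {s..s'}" for q
          using that s' in_ball by auto
      qed
    qed (use \<open>d > 0\<close> \<open>s < t\<close> in auto)
  qed (use \<open>t0 \<le> t\<close> in simp_all)
qed

lemma basin_min_le_gradient_flow_value:
  fixes g :: "'a::real_inner \<Rightarrow> real" and w :: "real \<Rightarrow> 'a"
  assumes grad: "\<And>x. (g has_derivative (\<lambda>h. gradient g x \<bullet> h)) (at x)"
    and flow: "\<And>t. 0 \<le> t \<Longrightarrow> (w has_vector_derivative - gradient g (w t)) (at t within {0..})"
    and inward: "\<And>x. x \<in> ball z r \<Longrightarrow> 0 \<le> gradient g x \<bullet> (x - z)"
    and min: "\<And>x. x \<in> ball z r \<Longrightarrow> g z \<le> g x"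
    and "0 \<le> t0" "w t0 \<in> ball z r" "0 \<le> t"
  shows "g z \<le> g (w t)"
proof (cases "t \<le> t0")
  case True
  have "g z \<le> g (w t0)"
    using min \<open>w t0 \<in> ball z r\<close> by blast
  also have "\<dots> \<le> g (w t)"
    using grad flow \<open>0 \<le> t\<close> True by (rule gradient_flow_value_nonincreasing)
  finally show ?thesis .
next
  case False
  then have "dist z (w t) \<le> dist z (w t0)"
    using flow inward \<open>0 \<le> t0\<close> \<open>w t0 \<in> ball z r\<close> by (intro flow_dist_nonincreasing) auto
  then show ?thesis
    using \<open>w t0 \<in> ball z r\<close> by (intro min) simp
qed

lemma exists_radius_tolerance:
  fixes \<epsilon> B c :: real
  assumes "0 < \<epsilon>" "0 < B" "0 < c"
  obtains \<rho> \<delta> where "0 < \<rho>" "0 < \<delta>" "4 * B * \<rho> \<le> \<epsilon>" "4 * B * \<rho> \<le> sqrt c"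
    "2 * \<delta> \<le> \<epsilon>" "8 * \<delta> \<le> sqrt c * \<rho>" "3 * B^2 * \<rho> + B * \<delta> \<le> c"
proof -
  define \<rho> where "\<rho> = min (\<epsilon> / (4 * B)) (min (sqrt c / (4 * B)) (c / (6 * B^2)))"
  define \<delta> where "\<delta> = min (\<epsilon> / 2) (min (sqrt c * \<rho> / 8) (c / (2 * B)))"
  have "0 < \<rho>" "0 < \<delta>"
    using assms by (simp_all add: \<rho>_def \<delta>_def)
  have "\<rho> \<le> \<epsilon> / (4 * B)" "\<rho> \<le> sqrt c / (4 * B)" "\<rho> \<le> c / (6 * B^2)"
    by (simp_all add: \<rho>_def)
  then have \<rho>_bounds: "4 * B * \<rho> \<le> \<epsilon>" "4 * B * \<rho> \<le> sqrt c" "6 * B^2 * \<rho> \<le> c"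
    using assms by (simp_all add: field_simps)
  have "\<delta> \<le> \<epsilon> / 2" "\<delta> \<le> sqrt c * \<rho> / 8" "\<delta> \<le> c / (2 * B)"
    by (simp_all add: \<delta>_def)
  then have \<delta>_bounds: "2 * \<delta> \<le> \<epsilon>" "8 * \<delta> \<le> sqrt c * \<rho>" "2 * B * \<delta> \<le> c"
    using assms by (simp_all add: field_simps)
  show ?thesis
    by (rule that[of \<rho> \<delta>]) (use \<open>0 < \<rho>\<close> \<open>0 < \<delta>\<close> \<rho>_bounds \<delta>_bounds in linarith)+
qed

text \<open>The constraints on the
  constants keep \<open>\<Phi>\<close> of the ball inside \<open>ball f \<epsilon>\<close> (\<open>4 B \<rho> \<le> \<epsilon>\<close>, \<open>2 \<delta> \<le> \<epsilon>\<close>),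
  make the gradient of the loss monotone on it (\<open>3 B\<^sup>2 \<rho> + B \<delta> \<le> c\<close>) and keep its minimiser in
  \<open>ball a (\<rho> / 2)\<close> (\<open>4 B \<rho> \<le> \<surd>c\<close>, \<open>8 \<delta> \<le> \<surd>c \<rho>\<close>).\<close>

locale small_residual =
  fixes \<Phi> :: "'a::euclidean_space \<Rightarrow> 'b::euclidean_space"
    and \<Phi>' :: "'a \<Rightarrow> ('a \<Rightarrow>\<^sub>L 'b)"
    and \<Phi>'' :: "'a \<Rightarrow> ('a \<Rightarrow>\<^sub>L ('a \<Rightarrow>\<^sub>L 'b))"
    and f :: 'b and a :: 'a
    and \<epsilon> B c \<rho> \<delta> :: real
  assumes has_derivative_\<Phi>: "\<And>x. (\<Phi> has_derivative blinfun_apply (\<Phi>' x)) (at x)"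
    and has_derivative_\<Phi>': "\<And>x. (\<Phi>' has_derivative blinfun_apply (\<Phi>'' x)) (at x)"
    and bounded: "\<And>x. \<Phi> x \<in> ball f \<epsilon> \<Longrightarrow> norm (\<Phi>' x) \<le> B \<and> norm (\<Phi>'' x) \<le> B"
    and coercive: "\<And>x v. \<Phi> x \<in> ball f \<epsilon> \<Longrightarrow> c * (norm v)^2 \<le> (norm (\<Phi>' x v))^2"
    and residual_center: "norm (f - \<Phi> a) < \<delta>"
    and positive: "0 < \<rho>" "0 < B"
    and radius: "4 * B * \<rho> \<le> \<epsilon>" "4 * B * \<rho> \<le> sqrt c"
    and tolerance: "2 * \<delta> \<le> \<epsilon>" "8 * \<delta> \<le> sqrt c * \<rho>" "3 * B^2 * \<rho> + B * \<delta> \<le> c"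
begin

lemma residual_on_cball:
  assumes "x \<in> cball a \<rho>"
  shows "norm (f - \<Phi> x) \<le> norm (f - \<Phi> a) + B * \<rho>" and "\<Phi> x \<in> ball f \<epsilon>"
proof -
  have "norm (x - a) \<le> \<rho>"
    using assms by (simp add: dist_norm norm_minus_commute)
  then have "B * norm (x - a) \<le> B * \<rho>"
    using positive by simp
  moreover have "norm (\<Phi> x - \<Phi> a) \<le> B * norm (x - a)"
  proof (rule norm_diff_le_if_derivative_bounded_near_image[OF has_derivative_\<Phi>])
    show "\<And>x. \<Phi> x \<in> ball f \<epsilon> \<Longrightarrow> norm (\<Phi>' x) \<le> B"
      using bounded by blast
    show "0 \<le> B"
      using positive by simp
    show "dist f (\<Phi> a) + B * norm (x - a) < \<epsilon>"
      unfolding dist_norm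
      using \<open>B * norm (x - a) \<le> B * \<rho>\<close> norm_ge_zero[of "f - \<Phi> a"] residual_center radius tolerance
      by linarith
  qed
  ultimately show "norm (f - \<Phi> x) \<le> norm (f - \<Phi> a) + B * \<rho>"
    using norm_triangle_ineq[of "f - \<Phi> a" "\<Phi> a - \<Phi> x"] by (simp add: norm_minus_commute)
  then show "\<Phi> x \<in> ball f \<epsilon>"
    unfolding mem_ball dist_norm
    using norm_ge_zero[of "f - \<Phi> a"] residual_center radius tolerance by linarith
qed

lemma gradient_monotone_on_cball:
  assumes "x \<in> cball a \<rho>" "y \<in> cball a \<rho>"
  shows "0 \<le> (gradient (loss \<Phi> f) x - gradient (loss \<Phi> f) y) \<bullet> (x - y)"
proof -
  have segment: "closed_segment y x \<subseteq> cball a \<rho>"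
    using assms by (simp add: closed_segment_subset)
  have lower: "(c - B^2 * norm (x - y) - B * norm (f - \<Phi> x)) * (norm (x - y))^2
      \<le> (gradient (loss \<Phi> f) x - gradient (loss \<Phi> f) y) \<bullet> (x - y)"
  proof (rule inner_gradient_loss_diff_ge[OF has_derivative_\<Phi> has_derivative_\<Phi>'])
    show "norm (\<Phi>' z) \<le> B" "norm (\<Phi>'' z) \<le> B" if "z \<in> closed_segment y x" for z
      using that segment residual_on_cball(2) bounded by blast+
    show "c * (norm v)^2 \<le> (norm (\<Phi>' y v))^2" for v
      using coercive residual_on_cball(2)[OF assms(2)] by blast
  qed
  have "norm (x - y) \<le> 2 * \<rho>"
    using assms dist_triangle[of x y a] by (simp add: dist_norm norm_minus_commute)
  then have "B^2 * norm (x - y) \<le> B^2 * (2 * \<rho>)"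
    by (simp add: mult_left_mono)
  moreover have "B * norm (f - \<Phi> x) \<le> B * (\<delta> + B * \<rho>)"
    using residual_on_cball(1)[OF assms(1)] residual_center positive by simp
  ultimately have "0 \<le> c - B^2 * norm (x - y) - B * norm (f - \<Phi> x)"
    using tolerance(3) by (simp add: power2_eq_square algebra_simps)
  then have "0 \<le> (c - B^2 * norm (x - y) - B * norm (f - \<Phi> x)) * (norm (x - y))^2"
    by simp
  with lower show ?thesis
    by linarith
qed

lemma sqrt_c_pos: "0 < sqrt c"
proof -
  have "0 < \<delta>"
    using residual_center norm_ge_zero[of "f - \<Phi> a"] by linarith
  then have "0 < B * \<delta>" "0 < 3 * B^2 * \<rho>"
    using positive by simp_all
  then have "0 < c"
    using tolerance(3) by linarith
  then show ?thesis
    by simp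
qed

text \<open>Coercivity at \<open>a\<close> against the Taylor expansion:
  \<open>\<surd>c |v| \<le> |\<Phi>' a v| \<le> 2 |f - \<Phi> a| + \<surd>c |v| / 4\<close> for \<open>v = z - a\<close>.\<close>

lemma minimizer_near_center:
  assumes "z \<in> cball a \<rho>" "loss \<Phi> f z \<le> loss \<Phi> f a"
  shows "norm (z - a) < \<rho> / 2"
proof -
  define v where "v = z - a"
  have "norm v \<le> \<rho>"
    using assms(1) by (simp add: v_def dist_norm norm_minus_commute)
  have "(norm (f - \<Phi> z))^2 \<le> (norm (f - \<Phi> a))^2"
    using assms(2) by (simp add: loss_def)
  then have residual_z: "norm (f - \<Phi> z) \<le> norm (f - \<Phi> a)"
    by (rule power2_le_imp_le) simp
  have segment: "closed_segment a z \<subseteq> cball a \<rho>"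
    using assms(1) positive by (simp add: closed_segment_subset)
  have "norm (\<Phi> z - \<Phi> a - \<Phi>' a v) \<le> B * (norm v)^2"
    unfolding v_def
  proof (rule norm_linearization_error_le[OF has_derivative_\<Phi> has_derivative_\<Phi>'])
    show "norm (\<Phi>'' q) \<le> B" if "q \<in> closed_segment a z" for q
      using that segment residual_on_cball(2) bounded by blast
  qed
  also have "\<dots> \<le> B * (\<rho> * norm v)"
  proof (rule mult_left_mono)
    show "(norm v)^2 \<le> \<rho> * norm v"
      unfolding power2_eq_square using \<open>norm v \<le> \<rho>\<close> by (rule mult_right_mono) simp
  qed (use positive in simp)
  also have "\<dots> \<le> (sqrt c / 4) * norm v"
    using mult_right_mono[of "B * \<rho>" "sqrt c / 4" "norm v"] radius(2) by (simp add: mult.assoc)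
  finally have error: "norm (\<Phi> z - \<Phi> a - \<Phi>' a v) \<le> (sqrt c / 4) * norm v" .
  have "(sqrt c * norm v)^2 \<le> (norm (\<Phi>' a v))^2"
    using coercive[OF residual_on_cball(2)] positive sqrt_c_pos by (simp add: power_mult_distrib)
  then have "sqrt c * norm v \<le> norm (\<Phi>' a v)"
    by (rule power2_le_imp_le) simp
  also have "\<dots> \<le> norm (f - \<Phi> a) + norm (f - \<Phi> z) + norm (\<Phi> z - \<Phi> a - \<Phi>' a v)"
    using norm_triangle_ineq4[of "f - \<Phi> a" "(f - \<Phi> z) + (\<Phi> z - \<Phi> a - \<Phi>' a v)"]
      norm_triangle_ineq[of "f - \<Phi> z" "\<Phi> z - \<Phi> a - \<Phi>' a v"]
    by simp
  finally have "3 * (sqrt c * norm v) < sqrt c * \<rho>"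
    using error residual_z residual_center tolerance(2) by linarith
  then have "3 * norm v < \<rho>"
    using sqrt_c_pos by simp
  with norm_ge_zero[of v] show ?thesis
    unfolding v_def by linarith
qed

lemma exists_attracting_minimizer:
  "\<exists>z. a \<in> ball z (\<rho> / 2) \<and>
    (\<forall>x\<in>ball z (\<rho> / 2). 0 \<le> gradient (loss \<Phi> f) x \<bullet> (x - z) \<and> loss \<Phi> f z \<le> loss \<Phi> f x)"
proof -
  have loss_deriv: "(loss \<Phi> f has_derivative (\<lambda>h. gradient (loss \<Phi> f) x \<bullet> h)) (at x)" for x
    using has_derivative_\<Phi> by (rule has_derivative_loss_gradient)
  then have "continuous_on (cball a \<rho>) (loss \<Phi> f)"
    by (meson continuous_at_imp_continuous_on has_derivative_continuous)
  moreover have "cball a \<rho> \<noteq> {}"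
    using positive by simp
  ultimately obtain z where z: "z \<in> cball a \<rho>"
    and z_min: "\<forall>x\<in>cball a \<rho>. loss \<Phi> f z \<le> loss \<Phi> f x"
    using continuous_attains_inf[OF compact_cball] by blast
  have "a \<in> cball a \<rho>"
    using positive by simp
  with z z_min have "norm (z - a) < \<rho> / 2"
    by (intro minimizer_near_center) auto
  then have a_near: "a \<in> ball z (\<rho> / 2)"
    by (simp add: dist_norm)
  have inside: "ball z (\<rho> / 2) \<subseteq> cball a \<rho>"
  proof
    fix x
    assume "x \<in> ball z (\<rho> / 2)"
    then show "x \<in> cball a \<rho>"
      using a_near dist_triangle[of a x z] by (simp add: dist_commute)
  qed
  have "eventually (\<lambda>x. x \<in> ball z (\<rho> / 2)) (at z)"
    using eventually_at_ball[of "\<rho> / 2" z UNIV] positive by simp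
  then have "eventually (\<lambda>x. loss \<Phi> f z \<le> loss \<Phi> f x) (at z)"
    by (rule eventually_mono) (use inside z_min in blast)
  then have "(\<lambda>h. gradient (loss \<Phi> f) z \<bullet> h) = (\<lambda>h. 0)"
    by (rule has_derivative_local_min[OF loss_deriv])
  then have "gradient (loss \<Phi> f) z \<bullet> gradient (loss \<Phi> f) z = 0"
    by (rule fun_cong)
  then have critical: "gradient (loss \<Phi> f) z = 0"
    by simp
  have "0 \<le> gradient (loss \<Phi> f) x \<bullet> (x - z) \<and> loss \<Phi> f z \<le> loss \<Phi> f x"
    if "x \<in> ball z (\<rho> / 2)" for x
    using gradient_monotone_on_cball[of x z] inside z z_min that critical by auto
  with a_near show ?thesis
    by blast
qed

end

lemma in_range_if_gradient_flow_inf_loss_0: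
  fixes \<Phi> :: "'a::euclidean_space \<Rightarrow> 'b::euclidean_space"
    and \<Phi>' :: "'a \<Rightarrow> ('a \<Rightarrow>\<^sub>L 'b)"
    and \<Phi>'' :: "'a \<Rightarrow> ('a \<Rightarrow>\<^sub>L ('a \<Rightarrow>\<^sub>L 'b))"
    and w :: "real \<Rightarrow> 'a"
  assumes D1: "\<And>x. (\<Phi> has_derivative blinfun_apply (\<Phi>' x)) (at x)"
    and D2: "\<And>x. (\<Phi>' has_derivative blinfun_apply (\<Phi>'' x)) (at x)"
    and "0 < \<epsilon>" "0 < B" "0 < c"
    and bounded: "\<And>x. \<Phi> x \<in> ball f \<epsilon> \<Longrightarrow> norm (\<Phi>' x) \<le> B \<and> norm (\<Phi>'' x) \<le> B"
    and coercive: "\<And>x v. \<Phi> x \<in> ball f \<epsilon> \<Longrightarrow> c * (norm v)^2 \<le> (norm (\<Phi>' x v))^2"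
    and flow: "\<And>t. 0 \<le> t \<Longrightarrow> (w has_vector_derivative - gradient (loss \<Phi> f) (w t)) (at t within {0..})"
    and inf_zero: "(INF t\<in>{0..}. loss \<Phi> f (w t)) = 0"
  shows "f \<in> range \<Phi>"
proof -
  obtain \<rho> \<delta> where constants: "0 < \<rho>" "0 < \<delta>" "4 * B * \<rho> \<le> \<epsilon>" "4 * B * \<rho> \<le> sqrt c"
      "2 * \<delta> \<le> \<epsilon>" "8 * \<delta> \<le> sqrt c * \<rho>" "3 * B^2 * \<rho> + B * \<delta> \<le> c"
    by (rule exists_radius_tolerance[OF \<open>0 < \<epsilon>\<close> \<open>0 < B\<close> \<open>0 < c\<close>])
  have "\<exists>y\<in>(\<lambda>t. loss \<Phi> f (w t)) ` {0..}. y < \<delta>^2 / 2"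
    using inf_zero \<open>0 < \<delta>\<close> by (intro cInf_lessD) simp_all
  then obtain t0 where "0 \<le> t0" and "loss \<Phi> f (w t0) < \<delta>^2 / 2"
    by auto
  then have "(norm (f - \<Phi> (w t0)))^2 < \<delta>^2"
    by (simp add: loss_def)
  then have residual: "norm (f - \<Phi> (w t0)) < \<delta>"
    by (rule power_less_imp_less_base) (use \<open>0 < \<delta>\<close> in simp)
  interpret small_residual \<Phi> \<Phi>' \<Phi>'' f "w t0" \<epsilon> B c \<rho> \<delta>
    by unfold_locales (fact D1 D2 bounded coercive residual constants \<open>0 < B\<close>)+
  obtain z where "w t0 \<in> ball z (\<rho> / 2)"
    and attracting: "\<forall>x\<in>ball z (\<rho> / 2). 0 \<le> gradient (loss \<Phi> f) x \<bullet> (x - z) \<and> loss \<Phi> f z \<le> loss \<Phi> f x"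
    using exists_attracting_minimizer by blast
  have "loss \<Phi> f z \<le> loss \<Phi> f (w t)" if "0 \<le> t" for t
  proof (rule basin_min_le_gradient_flow_value[OF has_derivative_loss_gradient[OF D1] flow _ _
        \<open>0 \<le> t0\<close> \<open>w t0 \<in> ball z (\<rho> / 2)\<close> that])
    show "0 \<le> gradient (loss \<Phi> f) x \<bullet> (x - z)" "loss \<Phi> f z \<le> loss \<Phi> f x"
      if "x \<in> ball z (\<rho> / 2)" for x
      using attracting that by blast+
  qed
  then have "loss \<Phi> f z \<le> (INF t\<in>{0..}. loss \<Phi> f (w t))"
    by (intro cINF_greatest) auto
  then have "f = \<Phi> z"
    using inf_zero by (simp add: loss_def)
  then show ?thesis
    by simp
qed

theorem proposition2:
  fixes \<Phi> :: "real^'w \<Rightarrow> real^'d"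
    and \<Phi>' :: "real^'w \<Rightarrow> ((real^'w) \<Rightarrow>\<^sub>L (real^'d))"
    and \<Phi>'' :: "real^'w \<Rightarrow> ((real^'w) \<Rightarrow>\<^sub>L ((real^'w) \<Rightarrow>\<^sub>L (real^'d)))"
    and U :: "(real^'d) set"
  assumes dims: "CARD('w) < CARD('d)"
    and D1: "\<And>w. (\<Phi> has_derivative blinfun_apply (\<Phi>' w)) (at w)"
    and D2: "\<And>w. (\<Phi>' has_derivative blinfun_apply (\<Phi>'' w)) (at w)"
    and C2: "continuous_on UNIV \<Phi>''"
    and U_open: "open U"
    and bdd: "\<exists>B. \<forall>w\<in>\<Phi> -` U. norm (\<Phi>' w) \<le> B \<and> norm (\<Phi>'' w) \<le> B"
    and nondeg: "\<exists>c>0. \<forall>w\<in>\<Phi> -` U.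
        eigenvalues_ge (transpose (matrix (blinfun_apply (\<Phi>' w))) ** matrix (blinfun_apply (\<Phi>' w))) c"
  shows "GF_learnable \<Phi> \<inter> U \<subseteq> range \<Phi>"
proof
  fix f
  assume "f \<in> GF_learnable \<Phi> \<inter> U"
  then obtain w where "f \<in> U"
    and flow: "\<And>t. 0 \<le> t \<Longrightarrow> (w has_vector_derivative - gradient (loss \<Phi> f) (w t)) (at t within {0..})"
    and inf_zero: "(INF t\<in>{0..}. loss \<Phi> f (w t)) = 0"
    unfolding GF_learnable_def by blast
  obtain \<epsilon> where "0 < \<epsilon>" and "ball f \<epsilon> \<subseteq> U"
    using U_open \<open>f \<in> U\<close> open_contains_ball by blast
  obtain B where B: "\<forall>x\<in>\<Phi> -` U. norm (\<Phi>' x) \<le> B \<and> norm (\<Phi>'' x) \<le> B"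
    using bdd by blast
  obtain c where "0 < c" and c: "\<forall>x\<in>\<Phi> -` U.
      eigenvalues_ge (transpose (matrix (blinfun_apply (\<Phi>' x))) ** matrix (blinfun_apply (\<Phi>' x))) c"
    using nondeg by blast
  have coercive: "c * (norm v)^2 \<le> (norm (\<Phi>' x v))^2" if "\<Phi> x \<in> ball f \<epsilon>" for x v
    using c that \<open>ball f \<epsilon> \<subseteq> U\<close>
    by (intro norm_ge_if_eigenvalues_ge bounded_linear.linear[OF blinfun.bounded_linear_right]) blast
  have bounded: "norm (\<Phi>' x) \<le> max B 1 \<and> norm (\<Phi>'' x) \<le> max B 1" if "\<Phi> x \<in> ball f \<epsilon>" for x
    using B[rule_format, of x] that \<open>ball f \<epsilon> \<subseteq> U\<close> by (auto simp: le_max_iff_disj)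
  show "f \<in> range \<Phi>"
    by (rule in_range_if_gradient_flow_inf_loss_0[OF D1 D2 \<open>0 < \<epsilon>\<close> _ \<open>0 < c\<close> bounded coercive flow inf_zero])
      simp
qed

end
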